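(* There is an absolute constant $c>0$ such that for all $k\ge3$, with $R=F_{\lceil 2k/3\rceil}$, $$\mathcal{Q}_R(\mathcal{F}_k)\le c\,F_k^{-2/3},$$ where $\mathcal{F}_k=\{(j/F_k,\{jF_{k-1}/F_k\})\mid j=1,\ldots,F_k\}$.
   Context: $F_k$ is the $k$-th Fibonacci number: $F_1=F_2=1$, $F_k=F_{k-1}+F_{k-2}$; $\{x\}=x-\lfloor x\rfloor$. For $\boldsymbol{n}=(n_1,n_2)\in\mathbb{Z}^2$ let $|\boldsymbol{n}|=\max\{|n_1|,|n_2|\}$. For a point set $T_M=\{\boldsymbol{x}_1,\ldots,\boldsymbol{x}_M\}\subset\mathbb{R}^2$ and $R>0$, $$\mathcal{Q}_R(T_M)=\frac1R+\sum_{\substack{\boldsymbol{n}\in\mathbb{Z}^2\\0<|\boldsymbol{n}|<R}}\Big(\frac{1}{|\boldsymbol{n}|^{3/2}}+\frac{1}{(1+|n_1|)(1+|n_2|)}\Big)\Big|\frac1M\sum_{j=1}^M e^{2\pi\mathrm{i}\,\boldsymbol{n}\cdot\boldsymbol{x}_j}\Big|.$$ *)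

theory Defs
  imports "HOL-Analysis.Analysis" "HOL-Number_Theory.Fib"
begin

definition supnorm :: "int \<times> int \<Rightarrow> int" where
  "supnorm n = max \<bar>fst n\<bar> \<bar>snd n\<bar>"

definition expsum :: "nat \<Rightarrow> (nat \<Rightarrow> real \<times> real) \<Rightarrow> int \<times> int \<Rightarrow> complex" where
  "expsum M x n = (1 / of_nat M) *
     (\<Sum>j=1..M. cis (2 * pi * (of_int (fst n) * fst (x j) + of_int (snd n) * snd (x j))))"

definition QR :: "real \<Rightarrow> nat \<Rightarrow> (nat \<Rightarrow> real \<times> real) \<Rightarrow> real" where
  "QR R M x = 1 / R +
     (\<Sum>n\<in>{n :: int \<times> int. 0 < supnorm n \<and> real_of_int (supnorm n) < R}.
        (1 / (real_of_int (supnorm n)) powr (3/2)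
         + 1 / ((1 + real_of_int \<bar>fst n\<bar>) * (1 + real_of_int \<bar>snd n\<bar>)))
        * cmod (expsum M x n))"

definition fibpt :: "nat \<Rightarrow> nat \<Rightarrow> real \<times> real" where
  "fibpt k j = (real j / real (fib k), frac (real j * real (fib (k - 1)) / real (fib k)))"

end

theory Submission
  imports Defs "HOL-Library.Real_Mod"
begin

(* The exponential sum of the Fibonacci lattice is the indicator function of its dual lattice
   L = {n. F_k divides n1 + n2 F_(k-1)}, so Q_R only sees the nonzero vectors of L with |n| < R.
   Writing n1 + n2 F_(k-1) = F_k p, Cassini's identity turns F_k^2 (p^2 + p n2 - n2^2) into
   n1^2 + (2 F_(k-1) + F_k) n1 n2 +- n2^2. The norm form p^2 + p q - q^2 vanishes only at 0, so
   dual vectors that are short compared with F_k satisfy |n1 n2| >= F_k / 6. Consequently two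
   dual vectors of sup-norm at most r have second coordinates at least F_k / (12 r) apart, and
   there are O(r^2 / F_k) of them. Summing the hyperbolic weight directly and the weight
   |n|^(-3/2) over dyadic shells gives Q_R <= 1/R + O(sqrt R / F_k + R^2 / F_k^2), which is
   O(F_k^(-2/3)) because R^3 and F_k^2 are comparable for R = F_(ceil(2k/3)). *)

section \<open>Exponential sums of the Fibonacci lattice\<close>

lemma cis_add_int_mult_frac:
  "cis (2 * pi * (y + of_int m * frac x)) = cis (2 * pi * (y + of_int m * x))"
proof -
  have "2 * pi * (y + of_int m * x) = 2 * pi * (y + of_int m * frac x) + 2 * pi * of_int (m * \<lfloor>x\<rfloor>)"
    by (simp add: frac_def algebra_simps)
  then show ?thesis
    by (simp add: cis_mult[symmetric])
qed

lemma sum_cis_multiples: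
  assumes "N > 0"
  shows "(\<Sum>j=1..N. cis (2 * pi * real j * (of_int a / real N))) = (if int N dvd a then of_nat N else 0)"
proof -
  define z where "z = cis (2 * pi * (of_int a / real N))"
  have powers: "cis (2 * pi * real j * (of_int a / real N)) = z ^ j" for j
    unfolding z_def Complex.DeMoivre by (simp add: mult_ac)
  have "(\<Sum>j=1..N. cis (2 * pi * real j * (of_int a / real N))) = (\<Sum>j=1..N. z ^ j)"
    by (rule sum.cong[OF refl powers])
  also have "\<dots> = (if int N dvd a then of_nat N else 0)"
  proof (cases "int N dvd a")
    case True
    then obtain q where "a = int N * q" by blast
    then have "z = 1"
      using assms unfolding z_def by simp
    then show ?thesis
      using True by simp
  next
    case False
    have "z \<noteq> 1"
    proof
      assume "z = 1"
      then obtain m where "2 * pi * (of_int a / real N) = of_int m * (2 * pi)"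
        unfolding z_def cis_eq_1_iff by blast
      then have "real_of_int a = real_of_int (m * int N)"
        using assms by (simp add: field_simps)
      then show False
        using False by (simp only: of_int_eq_iff) simp
    qed
    moreover have "z ^ N = 1"
      using assms by (simp add: z_def Complex.DeMoivre)
    ultimately have "(\<Sum>j<N. z ^ j) = 0"
      by (simp add: sum_gp_strict)
    moreover have "(\<Sum>j=1..N. z ^ j) = z * (\<Sum>j<N. z ^ j)"
      by (simp add: sum.atLeast1_atMost_eq sum_distrib_left)
    ultimately show ?thesis
      using False by simp
  qed
  finally show ?thesis .
qed

definition fib_dual :: "nat \<Rightarrow> (int \<times> int) set" where
  "fib_dual k = {n. int (fib k) dvd fst n + snd n * int (fib (k - 1))}"

lemma expsum_fibpt:
  assumes "k \<ge> 1"
  shows "expsum (fib k) (fibpt k) n = (if n \<in> fib_dual k then 1 else 0)"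
proof -
  define F where "F = real (fib k)"
  define a where "a = fst n + snd n * int (fib (k - 1))"
  have "fib k > 0"
    using assms by (simp add: fib_neq_0_nat)
  then have "F > 0"
    by (simp add: F_def)
  have phase: "cis (2 * pi * (of_int (fst n) * fst (fibpt k j) + of_int (snd n) * snd (fibpt k j)))
      = cis (2 * pi * real j * (of_int a / F))" for j
  proof -
    have "cis (2 * pi * (of_int (fst n) * fst (fibpt k j) + of_int (snd n) * snd (fibpt k j)))
        = cis (2 * pi * (of_int (fst n) * (real j / F) + of_int (snd n) * (real j * real (fib (k - 1)) / F)))"
      by (simp only: fibpt_def F_def fst_conv snd_conv cis_add_int_mult_frac)
    also have "\<dots> = cis (2 * pi * real j * (of_int a / F))"
      using \<open>F > 0\<close> by (simp add: a_def field_simps)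
    finally show ?thesis .
  qed
  have "expsum (fib k) (fibpt k) n = 1 / of_nat (fib k) * (\<Sum>j=1..fib k. cis (2 * pi * real j * (of_int a / F)))"
    unfolding expsum_def phase ..
  also have "\<dots> = (if n \<in> fib_dual k then 1 else 0)"
    using \<open>F > 0\<close> unfolding F_def sum_cis_multiples[OF \<open>fib k > 0\<close>]
    by (simp add: a_def fib_dual_def)
  finally show ?thesis .
qed

section \<open>Short vectors of the dual lattice\<close>

lemma golden_norm_eq_0_iff:
  fixes p q :: int
  shows "p^2 + p*q - q^2 = 0 \<longleftrightarrow> p = 0 \<and> q = 0"
proof
  assume norm: "p^2 + p*q - q^2 = 0"
  have sq: "(2*p + q)^2 = 5 * q^2"
    using norm by (simp add: algebra_simps power2_eq_square)
  have "q = 0"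
  proof (rule ccontr)
    (* the multiplicity of 5 is even on the left of sq and odd on the right *)
    assume "q \<noteq> 0"
    then have "2*p + q \<noteq> 0"
      using sq by auto
    have "prime_elem (5::int)"
      by simp
    then have "multiplicity 5 ((2*p + q)^2) = 2 * multiplicity 5 (2*p + q)"
      and "multiplicity 5 (5 * q^2) = Suc (2 * multiplicity 5 q)"
      using \<open>2*p + q \<noteq> 0\<close> \<open>q \<noteq> 0\<close>
      by (simp_all add: prime_elem_multiplicity_mult_distrib prime_elem_multiplicity_power_distrib
          multiplicity_self)
    then show False
      using arg_cong[OF sq, of "multiplicity 5"] by presburger
  qed
  then show "p = 0 \<and> q = 0"
    using norm by simp
qed simp

lemma dual_lattice_hyperbolic_bound:
  fixes F G v1 v2 :: int
  assumes cassini: "\<bar>G^2 + G*F - F^2\<bar> = 1" and "0 \<le> G" "G \<le> F"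
    and dual: "F dvd v1 + v2 * G" and nonzero: "(v1, v2) \<noteq> (0, 0)"
    and short: "2 * (v1^2 + v2^2) \<le> F^2"
  shows "F \<le> 6 * \<bar>v1\<bar> * \<bar>v2\<bar>"
proof -
  obtain p where p: "v1 + v2 * G = F * p"
    using dual by blast
  define D where "D = G^2 + G*F - F^2"
  have norm_identity: "F^2 * (p^2 + p * v2 - v2^2) = v1^2 + (2*G + F) * (v1 * v2) + D * v2^2"
  proof -
    have "F^2 * (p^2 + p * v2 - v2^2) = (F*p)^2 + (F*p) * v2 * F - F^2 * v2^2"
      by (simp add: algebra_simps power2_eq_square)
    also have "\<dots> = v1^2 + (2*G + F) * (v1 * v2) + D * v2^2"
      by (simp only: p[symmetric]) (simp add: D_def algebra_simps power2_eq_square)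
    finally show ?thesis .
  qed
  have "p^2 + p * v2 - v2^2 \<noteq> 0"
  proof
    assume "p^2 + p * v2 - v2^2 = 0"
    then have "p = 0 \<and> v2 = 0"
      by (simp only: golden_norm_eq_0_iff)
    then show False
      using nonzero p by simp
  qed
  then have "1 \<le> \<bar>p^2 + p * v2 - v2^2\<bar>"
    by linarith
  then have "F^2 \<le> \<bar>F^2 * (p^2 + p * v2 - v2^2)\<bar>"
    by (simp add: abs_mult mult_le_cancel_left1)
  also have "\<dots> \<le> v1^2 + v2^2 + (2*G + F) * \<bar>v1 * v2\<bar>"
    unfolding norm_identity using cassini \<open>0 \<le> G\<close> \<open>G \<le> F\<close>
    by (simp add: D_def abs_mult abs_triangle_ineq4 order_trans[OF abs_triangle_ineq])
  finally have "F^2 \<le> v1^2 + v2^2 + (2*G + F) * \<bar>v1 * v2\<bar>" .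
  moreover have "(2*G + F) * \<bar>v1 * v2\<bar> \<le> 3 * F * \<bar>v1 * v2\<bar>"
    using \<open>G \<le> F\<close> by (simp add: mult_right_mono)
  ultimately have "F * F \<le> F * (6 * \<bar>v1\<bar> * \<bar>v2\<bar>)"
    using short by (simp add: power2_eq_square abs_mult algebra_simps)
  then show ?thesis
    using \<open>0 \<le> G\<close> \<open>G \<le> F\<close> by (smt (verit) mult_le_cancel_left zero_le_mult_iff abs_ge_zero)
qed

lemma fib_Cassini_norm:
  "\<bar>int (fib n)^2 + int (fib n) * int (fib (Suc n)) - int (fib (Suc n))^2\<bar> = 1"
proof -
  have "int (fib n)^2 + int (fib n) * int (fib (Suc n)) - int (fib (Suc n))^2 = - ((-1)^n)"
    using fib_Cassini_int[of n] by (simp add: power2_eq_square algebra_simps)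
  then show ?thesis
    by simp
qed

lemma fib_dual_hyperbolic:
  assumes "k \<ge> 1" and "n \<in> fib_dual k" "n \<noteq> (0, 0)" and "2 * supnorm n \<le> int (fib k)"
  shows "int (fib k) \<le> 6 * \<bar>fst n\<bar> * \<bar>snd n\<bar>"
proof -
  have "fib (Suc (k - 1)) = fib k"
    using assms(1) by simp
  then have cassini: "\<bar>int (fib (k - 1))^2 + int (fib (k - 1)) * int (fib k) - int (fib k)^2\<bar> = 1"
    using fib_Cassini_norm[of "k - 1"] by simp
  have "fst n ^ 2 \<le> supnorm n ^ 2" "snd n ^ 2 \<le> supnorm n ^ 2"
    unfolding supnorm_def by (simp_all add: power2_le_iff_abs_le)
  then have "2 * (fst n ^ 2 + snd n ^ 2) \<le> (2 * supnorm n)^2"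
    by (simp add: power2_eq_square)
  also have "\<dots> \<le> int (fib k)^2"
    using assms(4) by (intro power_mono) (auto simp: supnorm_def)
  finally have short: "2 * (fst n ^ 2 + snd n ^ 2) \<le> int (fib k)^2" .
  have "int (fib (k - 1)) \<le> int (fib k)"
    by (simp add: fib_mono)
  moreover have "int (fib k) dvd fst n + snd n * int (fib (k - 1))"
    using assms(2) by (simp add: fib_dual_def)
  moreover have "(fst n, snd n) \<noteq> (0, 0)"
    using assms(3) by simp
  ultimately show ?thesis
    using dual_lattice_hyperbolic_bound[OF cassini _ _ _ _ short] by simp
qed

definition short_dual :: "nat \<Rightarrow> real \<Rightarrow> (int \<times> int) set" where
  "short_dual k r = {n \<in> fib_dual k. 0 < supnorm n \<and> real_of_int (supnorm n) \<le> r}"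

lemma finite_supnorm_le: "finite {n. real_of_int (supnorm n) \<le> r}"
proof -
  have "\<bar>fst n\<bar> \<le> \<lceil>r\<rceil> \<and> \<bar>snd n\<bar> \<le> \<lceil>r\<rceil>" if "real_of_int (supnorm n) \<le> r" for n
  proof -
    have "supnorm n \<le> \<lceil>r\<rceil>"
      using that by (simp add: le_ceiling_iff)
    then show ?thesis
      by (simp add: supnorm_def)
  qed
  then have "{n. real_of_int (supnorm n) \<le> r} \<subseteq> {-\<lceil>r\<rceil>..\<lceil>r\<rceil>} \<times> {-\<lceil>r\<rceil>..\<lceil>r\<rceil>}"
    by (force simp: abs_le_iff)
  then show ?thesis
    by (rule finite_subset) simp
qed

lemma finite_short_dual: "finite (short_dual k r)"
  by (rule finite_subset[OF _ finite_supnorm_le[of r]]) (auto simp: short_dual_def)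

lemma short_dual_abs_le:
  assumes "n \<in> short_dual k r"
  shows "\<bar>real_of_int (fst n)\<bar> \<le> r" "\<bar>real_of_int (snd n)\<bar> \<le> r"
proof -
  have "\<bar>fst n\<bar> \<le> supnorm n" "\<bar>snd n\<bar> \<le> supnorm n"
    by (simp_all add: supnorm_def)
  then have "\<bar>real_of_int (fst n)\<bar> \<le> real_of_int (supnorm n)"
    "\<bar>real_of_int (snd n)\<bar> \<le> real_of_int (supnorm n)"
    by (simp_all flip: of_int_abs)
  moreover have "real_of_int (supnorm n) \<le> r"
    using assms by (simp add: short_dual_def)
  ultimately show "\<bar>real_of_int (fst n)\<bar> \<le> r" "\<bar>real_of_int (snd n)\<bar> \<le> r"
    by linarith+
qed

lemma short_dual_hyperbolic:
  assumes "k \<ge> 1" "n \<in> short_dual k r" "2 * r \<le> real (fib k)"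
  shows "real (fib k) \<le> 6 * \<bar>real_of_int (fst n)\<bar> * \<bar>real_of_int (snd n)\<bar>"
proof -
  have n: "n \<in> fib_dual k" "0 < supnorm n" "real_of_int (supnorm n) \<le> r"
    using assms(2) by (simp_all add: short_dual_def)
  have "n \<noteq> (0, 0)"
    using n(2) by (auto simp: supnorm_def)
  have "real_of_int (2 * supnorm n) \<le> real_of_int (int (fib k))"
    using n(3) assms(3) by simp
  then have "2 * supnorm n \<le> int (fib k)"
    by (simp only: of_int_le_iff)
  with assms(1) n(1) \<open>n \<noteq> (0, 0)\<close> have "int (fib k) \<le> 6 * \<bar>fst n\<bar> * \<bar>snd n\<bar>"
    by (rule fib_dual_hyperbolic)
  then have "real_of_int (int (fib k)) \<le> real_of_int (6 * \<bar>fst n\<bar> * \<bar>snd n\<bar>)"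
    by (simp only: of_int_le_iff)
  then show ?thesis
    by simp
qed

lemma short_dual_diff:
  assumes "n \<in> short_dual k r" "n' \<in> short_dual k r" "n \<noteq> n'"
  shows "(fst n - fst n', snd n - snd n') \<in> short_dual k (2 * r)"
proof -
  define v where "v = (fst n - fst n', snd n - snd n')"
  have "int (fib k) dvd (fst n + snd n * int (fib (k - 1))) - (fst n' + snd n' * int (fib (k - 1)))"
    using assms(1,2) by (simp add: short_dual_def fib_dual_def)
  then have "v \<in> fib_dual k"
    by (simp add: v_def fib_dual_def algebra_simps)
  have "fst n \<noteq> fst n' \<or> snd n \<noteq> snd n'"
    using assms(3) prod_eqI by blast
  then have "0 < supnorm v"
    by (auto simp: v_def supnorm_def less_max_iff_disj)
  have "supnorm v \<le> supnorm n + supnorm n'"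
    unfolding v_def supnorm_def by (smt (verit) abs_triangle_ineq4 fst_conv snd_conv)
  moreover have "real_of_int (supnorm n) \<le> r" "real_of_int (supnorm n') \<le> r"
    using assms(1,2) by (simp_all add: short_dual_def)
  ultimately have "real_of_int (supnorm v) \<le> 2 * r"
    by (simp del: of_int_le_iff add: of_int_le_iff[symmetric])
  with \<open>v \<in> fib_dual k\<close> \<open>0 < supnorm v\<close> show ?thesis
    by (simp add: short_dual_def v_def)
qed

lemma card_separated_le:
  fixes A :: "real set"
  assumes "A \<subseteq> {a..b}" "a \<le> b" "d > 0"
    and separated: "\<And>x y. x \<in> A \<Longrightarrow> y \<in> A \<Longrightarrow> x \<noteq> y \<Longrightarrow> d \<le> \<bar>x - y\<bar>"
  shows "real (card A) \<le> (b - a) / d + 1"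
proof -
  define slot where "slot x = nat \<lfloor>(x - a) / d\<rfloor>" for x
  have "inj_on slot A"
  proof
    fix x y
    assume "x \<in> A" "y \<in> A" "slot x = slot y"
    moreover have "0 \<le> (x - a) / d" "0 \<le> (y - a) / d"
      using \<open>x \<in> A\<close> \<open>y \<in> A\<close> assms(1,3) by auto
    ultimately have "\<lfloor>(x - a) / d\<rfloor> = \<lfloor>(y - a) / d\<rfloor>"
      by (simp add: slot_def eq_nat_nat_iff)
    then have "\<bar>(x - a) / d - (y - a) / d\<bar> < 1"
      by linarith
    then have "\<bar>x - y\<bar> < d"
      using \<open>d > 0\<close> by (simp add: diff_divide_distrib[symmetric])
    then show "x = y"
      using separated \<open>x \<in> A\<close> \<open>y \<in> A\<close> by force
  qed
  moreover have "slot ` A \<subseteq> {..nat \<lfloor>(b - a) / d\<rfloor>}"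
    using assms(1,3) by (auto simp: slot_def intro!: nat_mono floor_mono divide_right_mono)
  ultimately have "card A \<le> Suc (nat \<lfloor>(b - a) / d\<rfloor>)"
    by (metis card_atMost card_image card_mono finite_atMost)
  also have "real \<dots> \<le> (b - a) / d + 1"
    using assms(2,3) by simp
  finally show ?thesis
    by simp
qed

lemma card_short_dual_le:
  assumes "k \<ge> 1" "r > 0" "4 * r \<le> real (fib k)"
  shows "real (card (short_dual k r)) \<le> 30 * r^2 / real (fib k)"
proof (cases "short_dual k r = {}")
  case False
  define F where "F = real (fib k)"
  have "F > 0"
    using assms(1) by (simp add: F_def fib_neq_0_nat)
  have "1 \<le> 6 * r^2 / F"
  proof -
    obtain n where n: "n \<in> short_dual k r"
      using False by blast
    have "F \<le> 6 * \<bar>real_of_int (fst n)\<bar> * \<bar>real_of_int (snd n)\<bar>"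
      using short_dual_hyperbolic[OF assms(1) n] assms(2,3) by (simp add: F_def)
    also have "\<dots> \<le> 6 * r * r"
      using short_dual_abs_le[OF n] by (simp add: mult_mono)
    finally show ?thesis
      using \<open>F > 0\<close> by (simp add: power2_eq_square)
  qed
  let ?y = "\<lambda>n. real_of_int (snd n)"
  have separated: "F / (12 * r) \<le> \<bar>?y n - ?y n'\<bar>"
    if "n \<in> short_dual k r" "n' \<in> short_dual k r" "n \<noteq> n'" for n n'
  proof -
    define v where "v = (fst n - fst n', snd n - snd n')"
    have v: "v \<in> short_dual k (2 * r)"
      using short_dual_diff[OF that] by (simp add: v_def)
    have "F \<le> 6 * \<bar>real_of_int (fst v)\<bar> * \<bar>real_of_int (snd v)\<bar>"
      using short_dual_hyperbolic[OF assms(1) v] assms(3) by (simp add: F_def)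
    also have "\<dots> \<le> 6 * (2 * r) * \<bar>real_of_int (snd v)\<bar>"
      using short_dual_abs_le(1)[OF v] by (simp add: mult_right_mono)
    finally show ?thesis
      using assms(2) by (simp add: v_def field_simps)
  qed
  then have "inj_on ?y (short_dual k r)"
    using \<open>F > 0\<close> assms(2) by (intro inj_onI) (smt (verit) divide_pos_pos)
  then have "card (short_dual k r) = card (?y ` short_dual k r)"
    by (simp add: card_image)
  also have "real \<dots> \<le> (r - (-r)) / (F / (12 * r)) + 1"
    using separated short_dual_abs_le(2)[of _ k r] assms(2) \<open>F > 0\<close>
    by (intro card_separated_le) (force simp: abs_le_iff)+
  also have "\<dots> = 24 * r^2 / F + 1"
    using assms(2) \<open>F > 0\<close> by (simp add: field_simps power2_eq_square)
  also have "\<dots> \<le> 30 * r^2 / F"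
    using \<open>1 \<le> 6 * r^2 / F\<close> by simp
  finally show ?thesis
    by (simp add: F_def)
qed simp

section \<open>Summing the weights\<close>

lemma ex_power2_between:
  fixes s :: real
  assumes "1 \<le> s"
  shows "\<exists>i. s \<le> 2^i \<and> 2^i < 2 * s"
proof -
  obtain n where "s < 2^n"
    using real_arch_pow[of 2 s] by auto
  define i where "i = (LEAST i. s \<le> (2::real)^i)"
  have "s \<le> 2^i"
    unfolding i_def by (rule LeastI[of _ n]) (use \<open>s < 2^n\<close> in simp)
  moreover have "2^i < 2 * s"
  proof (cases i)
    case (Suc j)
    then have "\<not> s \<le> 2^j"
      unfolding i_def by (metis Suc_n_not_le_n Least_le)
    then show ?thesis
      using Suc by simp
  qed (use assms in simp)
  ultimately show ?thesis
    by blast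
qed

lemma powr_neg_le_dyadic:
  fixes s a :: real
  assumes "1 \<le> s" "s \<le> 2^m" "0 \<le> a"
  shows "s powr (-a) \<le> 2 powr a * (\<Sum>i\<le>m. if s \<le> 2^i then (2^i) powr (-a) else 0)"
proof -
  obtain i where i: "s \<le> 2^i" "2^i < 2 * s"
    using ex_power2_between[OF assms(1)] by blast
  have "(2::real)^i < 2^Suc m"
    using i(2) assms(2) by simp
  then have "i \<le> m"
    by (simp only: power_strict_increasing_iff)
  have "s powr (-a) \<le> (2^i / 2) powr (-a)"
    using i(2) assms(3) by (intro powr_mono2') auto
  also have "\<dots> = 2 powr a * (2^i) powr (-a)"
    by (simp add: powr_divide powr_minus_divide)
  also have "(2^i) powr (-a) = (if s \<le> 2^i then ((2::real)^i) powr (-a) else 0)"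
    using i(1) by simp
  also have "\<dots> \<le> (\<Sum>i\<le>m. if s \<le> 2^i then (2^i) powr (-a) else 0)"
    by (rule member_le_sum) (use \<open>i \<le> m\<close> in auto)
  finally show ?thesis
    by simp
qed

lemma sum_powr_neg_le_dyadic:
  fixes f :: "'a \<Rightarrow> real"
  assumes "finite S" "0 \<le> a" "\<And>x. x \<in> S \<Longrightarrow> 1 \<le> f x \<and> f x \<le> 2^m"
  shows "(\<Sum>x\<in>S. f x powr (-a))
    \<le> 2 powr a * (\<Sum>i\<le>m. real (card {x\<in>S. f x \<le> 2^i}) * (2^i) powr (-a))"
proof -
  have "(\<Sum>x\<in>S. f x powr (-a))
      \<le> (\<Sum>x\<in>S. 2 powr a * (\<Sum>i\<le>m. if f x \<le> 2^i then (2^i) powr (-a) else 0))"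
    using assms(2,3) by (intro sum_mono powr_neg_le_dyadic) auto
  also have "\<dots> = 2 powr a * (\<Sum>i\<le>m. \<Sum>x\<in>S. if f x \<le> 2^i then (2^i) powr (-a) else 0)"
    by (simp add: sum_distrib_left sum.swap[of _ S])
  also have "\<dots> = 2 powr a * (\<Sum>i\<le>m. real (card {x\<in>S. f x \<le> 2^i}) * (2^i) powr (-a))"
    by (simp add: sum.inter_filter[OF assms(1), symmetric])
  finally show ?thesis .
qed

lemma sum_sqrt2_power_le: "(\<Sum>i\<le>m. sqrt 2 ^ i) \<le> 4 * sqrt 2 ^ m"
proof (induction m)
  case (Suc m)
  have "4 / 3 \<le> sqrt (2::real)"
    by (rule real_le_rsqrt) (simp add: power2_eq_square)
  then have "4 * sqrt 2 ^ m \<le> 3 * sqrt 2 * sqrt (2::real) ^ m"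
    by (simp add: mult_right_mono)
  have "(\<Sum>i\<le>Suc m. sqrt 2 ^ i) = (\<Sum>i\<le>m. sqrt 2 ^ i) + sqrt 2 * sqrt (2::real) ^ m"
    by simp
  also have "\<dots> \<le> 3 * sqrt 2 * sqrt 2 ^ m + sqrt 2 * sqrt 2 ^ m"
    using Suc.IH \<open>4 * sqrt 2 ^ m \<le> 3 * sqrt 2 * sqrt 2 ^ m\<close> by linarith
  also have "\<dots> = 4 * sqrt 2 ^ Suc m"
    by simp
  finally show ?case .
qed simp

lemma QR_fibpt_le_short_dual_sum:
  assumes "k \<ge> 1"
  shows "QR R (fib k) (fibpt k) \<le> 1 / R + (\<Sum>n\<in>short_dual k R.
    1 / real_of_int (supnorm n) powr (3/2) + 1 / ((1 + real_of_int \<bar>fst n\<bar>) * (1 + real_of_int \<bar>snd n\<bar>)))"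
proof -
  define A where "A = {n :: int \<times> int. 0 < supnorm n \<and> real_of_int (supnorm n) < R}"
  define w where "w n = 1 / real_of_int (supnorm n) powr (3/2)
    + 1 / ((1 + real_of_int \<bar>fst n\<bar>) * (1 + real_of_int \<bar>snd n\<bar>))" for n :: "int \<times> int"
  have "finite A"
    by (rule finite_subset[OF _ finite_supnorm_le[of R]]) (auto simp: A_def)
  have "QR R (fib k) (fibpt k) = 1 / R + (\<Sum>n\<in>A. if n \<in> fib_dual k then w n else 0)"
    unfolding QR_def A_def w_def by (intro arg_cong2[where f = "(+)"] sum.cong) (simp_all add: expsum_fibpt[OF assms])
  also have "(\<Sum>n\<in>A. if n \<in> fib_dual k then w n else 0) = (\<Sum>n\<in>{n\<in>A. n \<in> fib_dual k}. w n)"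
    by (rule sum.inter_filter[OF \<open>finite A\<close>, symmetric])
  also have "\<dots> \<le> (\<Sum>n\<in>short_dual k R. w n)"
    by (rule sum_mono2[OF finite_short_dual]) (auto simp: A_def short_dual_def w_def intro!: add_nonneg_nonneg)
  finally show ?thesis
    by (simp add: w_def)
qed

lemma sum_hyperbolic_weights_short_dual:
  assumes "k \<ge> 1" "r > 0" "4 * r \<le> real (fib k)"
  shows "(\<Sum>n\<in>short_dual k r. 1 / ((1 + real_of_int \<bar>fst n\<bar>) * (1 + real_of_int \<bar>snd n\<bar>)))
    \<le> 180 * r^2 / real (fib k)^2"
proof -
  define F where "F = real (fib k)"
  have "F > 0"
    using assms(1) by (simp add: F_def fib_neq_0_nat)
  have "(\<Sum>n\<in>short_dual k r. 1 / ((1 + real_of_int \<bar>fst n\<bar>) * (1 + real_of_int \<bar>snd n\<bar>)))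
      \<le> (\<Sum>n\<in>short_dual k r. 6 / F)"
  proof (rule sum_mono)
    fix n
    assume n: "n \<in> short_dual k r"
    have "F \<le> 6 * \<bar>real_of_int (fst n)\<bar> * \<bar>real_of_int (snd n)\<bar>"
      using short_dual_hyperbolic[OF assms(1) n] assms(2,3) by (simp add: F_def)
    also have "\<dots> \<le> 6 * ((1 + \<bar>real_of_int (fst n)\<bar>) * (1 + \<bar>real_of_int (snd n)\<bar>))"
      by (simp add: mult_mono)
    finally show "1 / ((1 + real_of_int \<bar>fst n\<bar>) * (1 + real_of_int \<bar>snd n\<bar>)) \<le> 6 / F"
      using \<open>F > 0\<close> by (simp add: field_simps)
  qed
  also have "\<dots> = real (card (short_dual k r)) * (6 / F)"
    by simp
  also have "\<dots> \<le> 30 * r^2 / F * (6 / F)"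
    using card_short_dual_le[OF assms] \<open>F > 0\<close> unfolding F_def[symmetric]
    by (intro mult_right_mono) auto
  also have "\<dots> = 180 * r^2 / F^2"
    by (simp add: power2_eq_square)
  finally show ?thesis
    by (simp add: F_def)
qed

lemma square_mult_powr_neg_three_halves:
  fixes x :: real
  assumes "x > 0"
  shows "x^2 * x powr (-(3/2)) = sqrt x"
  using powr_add[of x 2 "-(3/2)"] assms by (simp add: powr_half_sqrt)

lemma short_dual_dyadic_term_le:
  assumes "k \<ge> 1" "4 * 2^i \<le> real (fib k)"
  shows "real (card {n \<in> short_dual k r. real_of_int (supnorm n) \<le> 2^i}) * (2^i) powr (-(3/2))
    \<le> 30 / real (fib k) * sqrt 2 ^ i"
proof -
  have "real (card {n \<in> short_dual k r. real_of_int (supnorm n) \<le> 2^i}) \<le> real (card (short_dual k (2^i)))"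
    using finite_short_dual[of k "2^i"] by (auto simp: short_dual_def intro!: card_mono)
  also have "\<dots> \<le> 30 * (2^i)^2 / real (fib k)"
    using card_short_dual_le[OF assms(1)] assms(2) by simp
  finally have "real (card {n \<in> short_dual k r. real_of_int (supnorm n) \<le> 2^i}) * (2^i) powr (-(3/2))
      \<le> 30 * (2^i)^2 / real (fib k) * (2^i) powr (-(3/2))"
    by (rule mult_right_mono) simp
  also have "\<dots> = 30 / real (fib k) * ((2^i)^2 * (2^i) powr (-(3/2)))"
    by simp
  also have "\<dots> = 30 / real (fib k) * sqrt 2 ^ i"
    by (simp add: square_mult_powr_neg_three_halves real_sqrt_power)
  finally show ?thesis .
qed

lemma sum_supnorm_weights_short_dual:
  assumes "k \<ge> 1" "1 \<le> r" "8 * r \<le> real (fib k)"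
  shows "(\<Sum>n\<in>short_dual k r. 1 / real_of_int (supnorm n) powr (3/2)) \<le> 480 * sqrt r / real (fib k)"
proof -
  define F where "F = real (fib k)"
  have "F > 0"
    using assms(1) by (simp add: F_def fib_neq_0_nat)
  obtain m where m: "r \<le> 2^m" "2^m < 2 * r"
    using ex_power2_between[OF assms(2)] by blast
  have "(\<Sum>n\<in>short_dual k r. 1 / real_of_int (supnorm n) powr (3/2))
      = (\<Sum>n\<in>short_dual k r. real_of_int (supnorm n) powr (-(3/2)))"
    by (simp add: powr_minus_divide)
  also have "\<dots> \<le> 2 powr (3/2) * (\<Sum>i\<le>m.
      real (card {n \<in> short_dual k r. real_of_int (supnorm n) \<le> 2^i}) * (2^i) powr (-(3/2)))"
  proof (intro sum_powr_neg_le_dyadic finite_short_dual)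
    fix n
    assume "n \<in> short_dual k r"
    then have "0 < supnorm n" "real_of_int (supnorm n) \<le> r"
      by (simp_all add: short_dual_def)
    moreover from this(1) have "1 \<le> real_of_int (supnorm n)"
      by simp
    ultimately show "1 \<le> real_of_int (supnorm n) \<and> real_of_int (supnorm n) \<le> 2^m"
      using m(1) by linarith
  qed simp
  also have "\<dots> \<le> 2 powr (3/2) * (\<Sum>i\<le>m. 30 / F * sqrt 2 ^ i)"
  proof (intro mult_left_mono sum_mono)
    fix i
    assume "i \<in> {..m}"
    then have "(2::real)^i \<le> 2^m"
      by (simp add: power_increasing)
    then have "4 * 2^i \<le> F"
      using m(2) assms(3) unfolding F_def by linarith
    then show "real (card {n \<in> short_dual k r. real_of_int (supnorm n) \<le> 2^i}) * (2^i) powr (-(3/2))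
        \<le> 30 / F * sqrt 2 ^ i"
      unfolding F_def by (rule short_dual_dyadic_term_le[OF assms(1)])
  qed simp
  also have "\<dots> = 2 powr (3/2) * (30 / F * (\<Sum>i\<le>m. sqrt 2 ^ i))"
    by (simp add: sum_distrib_left)
  also have "\<dots> \<le> 2 powr (3/2) * (30 / F * (4 * sqrt 2 ^ m))"
    using sum_sqrt2_power_le[of m] \<open>F > 0\<close> by (intro mult_left_mono) auto
  also have "\<dots> \<le> 2 powr (3/2) * (30 / F * (4 * (sqrt 2 * sqrt r)))"
    using m(2) \<open>F > 0\<close>
    by (intro mult_left_mono) (auto simp: real_sqrt_power[symmetric] real_sqrt_mult[symmetric])
  also have "2 powr (3/2) = 2 * sqrt (2::real)"
    using powr_add[of "2::real" 1 "1/2"] by (simp add: powr_half_sqrt)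
  also have "2 * sqrt 2 * (30 / F * (4 * (sqrt 2 * sqrt r))) = (sqrt 2 * sqrt 2) * (240 * sqrt r / F)"
    by (simp add: ac_simps)
  finally show ?thesis
    by (simp add: F_def)
qed

lemma QR_fibpt_le:
  assumes "k \<ge> 1" "1 \<le> R" "8 * R \<le> real (fib k)"
  shows "QR R (fib k) (fibpt k) \<le> 1 / R + 480 * sqrt R / real (fib k) + 180 * R^2 / real (fib k)^2"
  using QR_fibpt_le_short_dual_sum[OF assms(1), of R] sum_supnorm_weights_short_dual[OF assms]
    sum_hyperbolic_weights_short_dual[OF assms(1), of R] assms(2,3)
  by (simp add: sum.distrib)

section \<open>Growth of Fibonacci numbers\<close>

definition \<phi> :: real where
  "\<phi> = (1 + sqrt 5) / 2"

lemma golden_ratio_squared: "\<phi>^2 = \<phi> + 1"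
  by (simp add: \<phi>_def power2_eq_square field_simps)

lemma golden_ratio_bounds: "1 \<le> \<phi>" "\<phi> \<le> 2"
proof -
  have "1 \<le> sqrt 5" "sqrt 5 \<le> 3"
    by (simp, rule real_le_lsqrt) simp_all
  then show "1 \<le> \<phi>" "\<phi> \<le> 2"
    by (simp_all add: \<phi>_def)
qed

lemma fib_Suc_le_golden_power: "real (fib (Suc n)) \<le> \<phi>^n"
proof (induction n rule: fib.induct)
  case (3 n)
  have "real (fib (Suc (Suc (Suc n)))) = real (fib (Suc (Suc n))) + real (fib (Suc n))"
    by simp
  also have "\<dots> \<le> \<phi>^Suc n + \<phi>^n"
    using "3.IH" by simp
  also have "\<dots> = \<phi>^n * (\<phi> + 1)"
    by (simp add: algebra_simps)
  also have "\<dots> = \<phi>^Suc (Suc n)"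
    by (simp add: golden_ratio_squared[symmetric] power2_eq_square)
  finally show ?case .
qed (use golden_ratio_bounds in simp_all)

lemma golden_power_le_fib: "\<phi>^n \<le> real (fib (n + 2))"
proof (induction n rule: fib.induct)
  case (3 n)
  have "\<phi>^Suc (Suc n) = \<phi>^n * \<phi>^2"
    by (simp add: power2_eq_square)
  also have "\<dots> = \<phi>^Suc n + \<phi>^n"
    by (simp add: golden_ratio_squared algebra_simps)
  also have "\<dots> \<le> real (fib (Suc n + 2)) + real (fib (n + 2))"
    using "3.IH" by simp
  also have "\<dots> = real (fib (Suc (Suc n) + 2))"
    by simp
  finally show ?case .
qed (use golden_ratio_bounds in \<open>simp_all add: numeral_eq_Suc\<close>)

lemma eight_fib_le_fib_add_5: "8 * fib n \<le> fib (n + 5)"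
  using fib_add[of n 4] fib_Suc_mono[of n] by (simp add: numeral_eq_Suc)

lemma ceiling_two_thirds_bounds:
  "2 * k \<le> 3 * nat \<lceil>2 * real k / 3\<rceil>" "3 * nat \<lceil>2 * real k / 3\<rceil> \<le> 2 * k + 2"
proof -
  have "2 * real k / 3 \<le> of_int \<lceil>2 * real k / 3\<rceil>" "of_int \<lceil>2 * real k / 3\<rceil> < 2 * real k / 3 + 1"
    by linarith+
  moreover have "real (nat \<lceil>2 * real k / 3\<rceil>) = of_int \<lceil>2 * real k / 3\<rceil>"
    by simp
  ultimately show "2 * k \<le> 3 * nat \<lceil>2 * real k / 3\<rceil>" "3 * nat \<lceil>2 * real k / 3\<rceil> \<le> 2 * k + 2"
    by linarith+
qed

lemma golden_ratio_power_le_8: "\<phi>^3 \<le> 8" "\<phi>^4 \<le> 8"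
proof -
  have "\<phi>^4 = (\<phi>^2)^2"
    by (simp flip: power_mult)
  also have "\<dots> = (\<phi> + 1)^2"
    by (simp only: golden_ratio_squared)
  also have "\<dots> = \<phi>^2 + 2 * \<phi> + 1"
    by (simp add: power2_eq_square algebra_simps)
  finally show "\<phi>^4 \<le> 8"
    using golden_ratio_bounds by (simp add: golden_ratio_squared)
  moreover have "\<phi>^3 \<le> \<phi>^4"
    using golden_ratio_bounds by (simp add: power_increasing)
  ultimately show "\<phi>^3 \<le> 8"
    by linarith
qed

lemma fib_golden_power_bounds:
  assumes "n \<ge> 2"
  shows "\<phi>^(n - 2) \<le> real (fib n)" "real (fib n) \<le> \<phi>^(n - 1)"
proof -
  have "n - 2 + 2 = n" "Suc (n - 1) = n"
    using assms by simp_all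
  then show "\<phi>^(n - 2) \<le> real (fib n)" "real (fib n) \<le> \<phi>^(n - 1)"
    using golden_power_le_fib[of "n - 2"] fib_Suc_le_golden_power[of "n - 1"] by simp_all
qed

lemma fib_two_thirds_cube_comparable:
  assumes "k \<ge> 3"
  defines "R \<equiv> real (fib (nat \<lceil>2 * real k / 3\<rceil>))" and "F \<equiv> real (fib k)"
  shows "R^3 \<le> 8 * F^2" "F^2 \<le> 8 * R^3"
proof -
  define k' where "k' = nat \<lceil>2 * real k / 3\<rceil>"
  have k': "2 * k \<le> 3 * k'" "3 * k' \<le> 2 * k + 2"
    using ceiling_two_thirds_bounds[of k] by (simp_all add: k'_def)
  have R: "\<phi>^(k' - 2) \<le> R" "R \<le> \<phi>^(k' - 1)" and F: "\<phi>^(k - 2) \<le> F" "F \<le> \<phi>^(k - 1)"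
    using fib_golden_power_bounds[of k'] fib_golden_power_bounds[of k] k' assms(1)
    by (simp_all add: R_def F_def k'_def)
  have "R^3 \<le> (\<phi>^(k' - 1))^3"
    using R by (intro power_mono) (auto simp: R_def)
  also have "\<dots> \<le> \<phi>^(3 + 2 * (k - 2))"
    unfolding power_mult[symmetric] using k' assms(1) golden_ratio_bounds
    by (intro power_increasing) auto
  also have "\<dots> = \<phi>^3 * (\<phi>^(k - 2))^2"
    by (simp add: power_add power_mult[symmetric] mult.commute)
  also have "\<dots> \<le> 8 * F^2"
    using F golden_ratio_power_le_8 golden_ratio_bounds by (intro mult_mono power_mono) auto
  finally show "R^3 \<le> 8 * F^2" .
  have "F^2 \<le> (\<phi>^(k - 1))^2"
    using F by (intro power_mono) (auto simp: F_def)
  also have "\<dots> \<le> \<phi>^(4 + 3 * (k' - 2))"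
    unfolding power_mult[symmetric] using k' assms(1) golden_ratio_bounds
    by (intro power_increasing) auto
  also have "\<dots> = \<phi>^4 * (\<phi>^(k' - 2))^3"
    by (simp add: power_add power_mult[symmetric] mult.commute)
  also have "\<dots> \<le> 8 * R^3"
    using R golden_ratio_power_le_8 golden_ratio_bounds by (intro mult_mono power_mono) auto
  finally show "F^2 \<le> 8 * R^3" .
qed

lemma comparable_square_bound:
  fixes R t a b c :: real
  assumes "0 < R" "0 < t" "R \<le> 2 * t^2" "t^2 \<le> 2 * R" "0 \<le> a" "0 \<le> b" "0 \<le> c"
  shows "a / R + b * sqrt R / t^3 + c * R^2 / (t^3)^2 \<le> 2 * a / t^2 + 2 * b / t^2 + 4 * c / t^2"
proof -
  have "1 / R \<le> 2 / t^2"
    using assms(1,2,4) by (simp add: divide_simps)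
  then have "a * (1 / R) \<le> a * (2 / t^2)"
    using assms(5) by (rule mult_left_mono)
  then have "a / R \<le> 2 * a / t^2"
    by (simp add: mult.commute)
  moreover have "b * sqrt R / t^3 \<le> 2 * b / t^2"
  proof -
    have "sqrt R \<le> sqrt (2 * t^2)"
      using assms(3) by simp
    also have "\<dots> \<le> 2 * t"
      using assms(2) by (simp add: real_sqrt_mult real_le_lsqrt)
    finally have "b * sqrt R / t^3 \<le> b * (2 * t) / t^3"
      using assms(2,6) by (intro divide_right_mono mult_left_mono) auto
    also have "\<dots> = 2 * b / t^2"
      using assms(2) by (simp add: power2_eq_square power3_eq_cube)
    finally show ?thesis .
  qed
  moreover have "c * R^2 / (t^3)^2 \<le> 4 * c / t^2"
  proof -
    have "R^2 \<le> (2 * t^2)^2"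
      using assms(1,3) by (intro power_mono) auto
    then have "c * R^2 / (t^3)^2 \<le> c * (2 * t^2)^2 / (t^3)^2"
      using assms(7) by (intro divide_right_mono mult_left_mono) auto
    also have "\<dots> = 4 * c / t^2"
      using assms(2) by (simp add: power2_eq_square power3_eq_cube)
    finally show ?thesis .
  qed
  ultimately show ?thesis
    by linarith
qed

lemma cube_comparable_bound:
  fixes R F a b c :: real
  assumes "0 < R" "0 < F" "R^3 \<le> 8 * F^2" "F^2 \<le> 8 * R^3" "0 \<le> a" "0 \<le> b" "0 \<le> c"
  shows "a / R + b * sqrt R / F + c * R^2 / F^2 \<le> (2*a + 2*b + 4*c) * F powr (-2/3)"
proof -
  define t where "t = F powr (1/3)"
  have "t > 0"
    using assms(2) by (simp add: t_def)
  have "t^3 = t powr 3"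
    by (simp add: t_def)
  also have "\<dots> = F"
    using assms(2) by (simp add: t_def powr_powr del: powr_numeral)
  finally have "t^3 = F" .
  have "t^2 = t powr 2"
    by (simp add: t_def)
  also have "\<dots> = F powr (2/3)"
    by (simp add: t_def powr_powr del: powr_numeral)
  finally have F_powr: "F powr (-2/3) = 1 / t^2"
    by (simp add: powr_minus_divide)
  have "(t^2)^3 = (t^3)^2"
    by (simp only: power_mult[symmetric] mult.commute)
  then have "(t^2)^3 \<le> (2 * R)^3" "R^3 \<le> (2 * t^2)^3"
    using assms(3,4) \<open>t^3 = F\<close> by (simp_all add: power_mult_distrib)
  then have "t^2 \<le> 2 * R" "R \<le> 2 * t^2"
    using power_mono_iff[of "t^2" "2 * R" 3] power_mono_iff[of R "2 * t^2" 3] assms(1) by simp_all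
  then show ?thesis
    using comparable_square_bound[OF assms(1) \<open>t > 0\<close> _ _ assms(5-7)] \<open>t^3 = F\<close>
    unfolding F_powr by (simp add: add_divide_distrib)
qed

lemma QR_fib_two_thirds_le:
  assumes "k \<ge> 17"
  shows "QR (real (fib (nat \<lceil>2 * real k / 3\<rceil>))) (fib k) (fibpt k) \<le> 1682 * real (fib k) powr (-2/3)"
proof -
  define k' where "k' = nat \<lceil>2 * real k / 3\<rceil>"
  define R where "R = real (fib k')"
  define F where "F = real (fib k)"
  have "k' + 5 \<le> k" "k' \<ge> 1"
    using ceiling_two_thirds_bounds[of k] assms by (simp_all add: k'_def)
  then have "8 * R \<le> F"
    using eight_fib_le_fib_add_5[of k'] fib_mono[of "k' + 5" k]
    unfolding R_def F_def by (simp del: of_nat_mult add: of_nat_mult[symmetric])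
  have "1 \<le> R"
    using \<open>k' \<ge> 1\<close> by (simp add: R_def Suc_le_eq fib_neq_0_nat)
  have "QR R (fib k) (fibpt k) \<le> 1 / R + 480 * sqrt R / F + 180 * R^2 / F^2"
    using QR_fibpt_le[of k R] assms \<open>1 \<le> R\<close> \<open>8 * R \<le> F\<close> by (simp add: F_def)
  also have "\<dots> \<le> (2 * 1 + 2 * 480 + 4 * 180) * F powr (-2/3)"
    using fib_two_thirds_cube_comparable[of k] assms \<open>1 \<le> R\<close> \<open>8 * R \<le> F\<close>
    by (intro cube_comparable_bound) (simp_all add: R_def F_def k'_def)
  finally show ?thesis
    by (simp add: R_def F_def k'_def)
qed

lemma eventual_bound_imp_uniform_bound:
  fixes f g :: "nat \<Rightarrow> real"
  assumes "\<And>k. k \<ge> K \<Longrightarrow> f k \<le> C * g k" "\<And>k. k \<ge> a \<Longrightarrow> g k > 0"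
  shows "\<exists>c > 0. \<forall>k. k \<ge> a \<longrightarrow> f k \<le> c * g k"
proof (intro exI conjI allI impI)
  define c where "c = \<bar>C\<bar> + 1 + (\<Sum>k<K. \<bar>f k / g k\<bar>)"
  have "0 \<le> (\<Sum>k<K. \<bar>f k / g k\<bar>)"
    by (simp add: sum_nonneg)
  then show "c > 0"
    by (simp add: c_def)
  fix k
  assume "k \<ge> a"
  then have "g k > 0"
    using assms(2) by blast
  show "f k \<le> c * g k"
  proof (cases "k \<ge> K")
    case True
    then have "f k \<le> \<bar>C\<bar> * g k"
      using assms(1)[of k] \<open>g k > 0\<close> by (smt (verit) mult_right_mono abs_ge_self)
    also have "\<dots> \<le> c * g k"
      unfolding c_def using \<open>g k > 0\<close> by (intro mult_right_mono add_increasing2 sum_nonneg) auto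
    finally show ?thesis .
  next
    case False
    have "f k \<le> \<bar>f k / g k\<bar> * g k"
      using \<open>g k > 0\<close> by (simp add: abs_divide)
    also have "\<dots> \<le> c * g k"
      unfolding c_def using False \<open>g k > 0\<close>
      by (intro mult_right_mono add_increasing member_le_sum) auto
    finally show ?thesis .
  qed
qed

theorem lemma1:
  shows "\<exists>c > (0::real). \<forall>k::nat. k \<ge> 3 \<longrightarrow>
    QR (real (fib (nat \<lceil>2 * real k / 3\<rceil>))) (fib k) (fibpt k)
      \<le> c * real (fib k) powr (-2/3)"
proof (rule eventual_bound_imp_uniform_bound[OF QR_fib_two_thirds_le])
  fix k :: nat
  assume "k \<ge> 3"
  then have "fib k > 0"
    by (simp add: fib_neq_0_nat)
  then show "real (fib k) powr (-2/3) > 0"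
    by simp
qed

end
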